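(* Let $A\subset\mathbb R^2$ be the convex quadrilateral with counterclockwise vertices $\mathbf v_1=(0,0)$, $\mathbf v_2=(1,0)$, $\mathbf v_3=(0,1)$, $\mathbf v_4=(-1,\tfrac12)$. Let $a\in[-1,1]$ and $$b=\frac{-12-13a+\sqrt{25^2+11\cdot 13\,(1-a^2)}}{4\cdot 13}.$$ Then the point $(a,b)$ lies on the equator of $A$, i.e. $(a,b)\in A$ and the Gibbs coordinates of $(a,b)$ with respect to $\mathbf v_1,\dots,\mathbf v_4$ coincide with its Wachspress coordinates.
   Context: Signed area: $A(\mathbf u_0,\mathbf u_1,\mathbf u_2)=\tfrac12\det[\mathbf u_1-\mathbf u_0,\mathbf u_2-\mathbf u_0]$. Wachspress coordinates of a point $\mathbf x$ in the interior of a convex polygon with counterclockwise vertices $\mathbf v_1,\dots,\mathbf v_n$ (indices mod $n$): weights $w_i(\mathbf x)=A(\mathbf v_{i-1},\mathbf v_i,\mathbf v_{i+1})/\big(A(\mathbf v_{i-1},\mathbf v_i,\mathbf x)\,A(\mathbf x,\mathbf v_i,\mathbf v_{i+1})\big)$, and coordinates $w(\mathbf x,\mathbf v_i)=w_i(\mathbf x)/\sum_j w_j(\mathbf x)$. For $\mathbf x$ on an edge $[\mathbf v_j,\mathbf v_{j+1}]$ the Wachspress coordinates are the barycentric coordinates of $\mathbf x$ with respect to $\mathbf v_j,\mathbf v_{j+1}$ and $0$ for all other vertices. Gibbs coordinates of $\mathbf x$: the unique probability distribution $(p_i)$ on $\{\mathbf v_1,\dots,\mathbf v_n\}$ with $\sum_i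 p_i\mathbf v_i=\mathbf x$ that maximizes the entropy $-\sum_i p_i\log p_i$ (with $0\log0=0$). The equator is the set of points of $A$ where Gibbs and Wachspress coordinates coincide. *)

theory Defs
  imports "HOL-Analysis.Analysis"
begin

type_synonym pt = "real \<times> real"

definition sarea :: "pt \<Rightarrow> pt \<Rightarrow> pt \<Rightarrow> real" where
  "sarea u0 u1 u2 = ((fst u1 - fst u0) * (snd u2 - snd u0)
                    - (snd u1 - snd u0) * (fst u2 - fst u0)) / 2"

text \<open>A polygon is given by n vertices v 0, ..., v (n-1) (counterclockwise);
  indices are taken mod n.\<close>
definition nxt :: "nat \<Rightarrow> nat \<Rightarrow> nat" where "nxt n i = (i + 1) mod n"
definition prv :: "nat \<Rightarrow> nat \<Rightarrow> nat" where "prv n i = (i + n - 1) mod n"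

definition polygon :: "(nat \<Rightarrow> pt) \<Rightarrow> nat \<Rightarrow> pt set" where
  "polygon v n = convex hull (v ` {0..<n})"

definition wach_weight :: "(nat \<Rightarrow> pt) \<Rightarrow> nat \<Rightarrow> pt \<Rightarrow> nat \<Rightarrow> real" where
  "wach_weight v n x i =
     sarea (v (prv n i)) (v i) (v (nxt n i))
     / (sarea (v (prv n i)) (v i) x * sarea x (v i) (v (nxt n i)))"

definition wachspress :: "(nat \<Rightarrow> pt) \<Rightarrow> nat \<Rightarrow> pt \<Rightarrow> nat \<Rightarrow> real" where
  "wachspress v n x i =
     (if x \<in> interior (polygon v n) then
        wach_weight v n x i / (\<Sum>j<n. wach_weight v n x j)
      else if x \<in> closed_segment (v i) (v (nxt n i)) then
        dist x (v (nxt n i)) / dist (v i) (v (nxt n i))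
      else if x \<in> closed_segment (v (prv n i)) (v i) then
        dist x (v (prv n i)) / dist (v (prv n i)) (v i)
      else 0)"

definition feasible :: "(nat \<Rightarrow> pt) \<Rightarrow> nat \<Rightarrow> pt \<Rightarrow> (nat \<Rightarrow> real) \<Rightarrow> bool" where
  "feasible v n x p \<longleftrightarrow> (\<forall>i<n. 0 \<le> p i) \<and> (\<forall>i\<ge>n. p i = 0)
     \<and> (\<Sum>i<n. p i) = 1 \<and> (\<Sum>i<n. p i *\<^sub>R v i) = x"

text \<open>Entropy, with 0 log 0 = 0 (note ln 0 = 0 in Isabelle).\<close>
definition entropy :: "nat \<Rightarrow> (nat \<Rightarrow> real) \<Rightarrow> real" where
  "entropy n p = - (\<Sum>i<n. p i * ln (p i))"

definition gibbs :: "(nat \<Rightarrow> pt) \<Rightarrow> nat \<Rightarrow> pt \<Rightarrow> nat \<Rightarrow> real" where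
  "gibbs v n x = (THE p. feasible v n x p \<and>
                     (\<forall>q. feasible v n x q \<longrightarrow> entropy n q \<le> entropy n p))"

definition quadV :: "nat \<Rightarrow> pt" where
  "quadV i = (if i = 0 then (0,0) else if i = 1 then (1,0)
              else if i = 2 then (0,1) else (-1, 1/2))"

end

theory Submission
  imports Defs
begin

(* Write e_i(x) for twice the signed area of (v_i, v_(i+1), x), an affine function that is
   positive inside the quadrilateral (vertices indexed 0..3 here). Multiplying the Wachspress
   weights by e_0 e_1 e_2 e_3 shows that the Wachspress coordinates are proportional to
   (e_1 e_2, 2 e_2 e_3, 3 e_3 e_0, 2 e_0 e_1). A positive feasible distribution whose logarithm
   is affine in the vertex maximises the entropy (compare with any other feasible q through the
   Bregman divergence of t ln t); since 3 v_0 - 2 v_1 + v_2 - 2 v_3 = 0 with coefficient sum 0,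
   this affinity amounts to p_1^2 p_3^2 = p_0^3 p_2. For the Wachspress coordinates it becomes
   16 e_0 e_3 = 3 e_1 e_2, i.e. 26 b^2 + (13 a + 12) b + 3 a^2 + 3 a - 6 = 0, whose root inside
   the quadrilateral is the given b. For a = 1 or a = -1 the point is the vertex v_1 or v_3,
   where both coordinates are the point mass. *)

lemma xlogx_bregman_nonneg:
  fixes p q :: real
  assumes "0 < p" "0 \<le> q"
  shows "0 \<le> q * ln q - q * ln p - q + p"
proof (cases "q = 0")
  case False
  with assms have "q * (ln p - ln q) \<le> p - q"
    using ln_diff_le[of p q] by (simp add: field_simps)
  then show ?thesis by (simp add: algebra_simps)
qed (use assms in simp)

lemma xlogx_bregman_eq_0_iff:
  fixes p q :: real
  assumes "0 < p" "0 \<le> q"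
  shows "q * ln q - q * ln p - q + p = 0 \<longleftrightarrow> q = p"
proof
  assume eq: "q * ln q - q * ln p - q + p = 0"
  show "q = p"
  proof (rule ccontr)
    assume "q \<noteq> p"
    moreover have "q \<noteq> 0" using eq assms by auto
    ultimately have "q * (ln p - ln q) < p - q"
      using assms ln_diff_less[of p q] by (simp add: field_simps)
    with eq show False by (simp add: algebra_simps)
  qed
qed simp

lemma feasible_cross_entropy:
  assumes "feasible v n x q"
    and "\<forall>i<n. ln (p i) = c + inner w (v i)"
  shows "(\<Sum>i<n. q i * ln (p i)) = c + inner w x"
proof -
  have "(\<Sum>i<n. q i * ln (p i)) = (\<Sum>i<n. c * q i + inner w (q i *\<^sub>R v i))"
    using assms(2) by (intro sum.cong) (simp_all add: algebra_simps)
  also have "\<dots> = c * (\<Sum>i<n. q i) + inner w (\<Sum>i<n. q i *\<^sub>R v i)"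
    by (simp only: sum.distrib sum_distrib_left inner_sum_right)
  also have "\<dots> = c + inner w x"
    using assms(1) by (simp add: feasible_def)
  finally show ?thesis .
qed

lemma gibbs_eqI:
  assumes fp: "feasible v n x p" and pos: "\<forall>i<n. 0 < p i"
    and log_affine: "\<forall>i<n. ln (p i) = c + inner w (v i)"
  shows "gibbs v n x = p"
proof -
  define gap where "gap q i = q i * ln (q i) - q i * ln (p i) - q i + p i" for q i
  have gap_nonneg: "0 \<le> gap q i" if "feasible v n x q" "i < n" for q i
    using that pos xlogx_bregman_nonneg by (simp add: gap_def feasible_def)
  have entropy_gap: "entropy n p - entropy n q = (\<Sum>i<n. gap q i)" if fq: "feasible v n x q" for q
  proof -
    have "(\<Sum>i<n. gap q i) = (\<Sum>i<n. q i * ln (q i)) - (\<Sum>i<n. q i * ln (p i)) - (\<Sum>i<n. q i) + (\<Sum>i<n. p i)"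
      by (simp add: gap_def sum.distrib sum_subtractf)
    also have "\<dots> = (\<Sum>i<n. q i * ln (q i)) - (\<Sum>i<n. p i * ln (p i))"
      using fq fp feasible_cross_entropy[OF _ log_affine] by (simp add: feasible_def)
    finally show ?thesis by (simp add: entropy_def)
  qed
  have entropy_le: "entropy n q \<le> entropy n p" if fq: "feasible v n x q" for q
    using entropy_gap[OF fq] sum_nonneg[of "{..<n}" "gap q"] gap_nonneg[OF fq] by simp
  show ?thesis
    unfolding gibbs_def
  proof (rule the_equality)
    show "feasible v n x p \<and> (\<forall>q. feasible v n x q \<longrightarrow> entropy n q \<le> entropy n p)"
      using fp entropy_le by blast
  next
    fix q assume "feasible v n x q \<and> (\<forall>r. feasible v n x r \<longrightarrow> entropy n r \<le> entropy n q)"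
    then have fq: "feasible v n x q" and "entropy n q = entropy n p"
      using fp entropy_le by (auto intro: order.antisym)
    then have "(\<Sum>i<n. gap q i) = 0"
      using entropy_gap[OF fq] by simp
    then have "\<forall>i<n. gap q i = 0"
      using gap_nonneg[OF fq] by (subst (asm) sum_nonneg_eq_0_iff) auto
    then have "\<forall>i<n. q i = p i"
      using fq pos xlogx_bregman_eq_0_iff by (auto simp: gap_def feasible_def)
    with fq fp show "q = p"
      by (metis feasible_def not_le ext)
  qed
qed

lemma gibbs_unique_feasible:
  assumes "feasible v n x p" and "\<And>q. feasible v n x q \<Longrightarrow> q = p"
  shows "gibbs v n x = p"
  unfolding gibbs_def
proof (rule the_equality)
  show "feasible v n x p \<and> (\<forall>q. feasible v n x q \<longrightarrow> entropy n q \<le> entropy n p)"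
    using assms by blast
qed (use assms in blast)

lemma feasible_in_polygon:
  assumes "feasible v n x p"
  shows "x \<in> polygon v n"
proof -
  have "(\<Sum>i<n. p i *\<^sub>R v i) \<in> convex hull (v ` {0..<n})"
    using assms by (intro convex_sum) (auto simp: feasible_def intro: hull_inc)
  with assms show ?thesis by (simp add: feasible_def polygon_def)
qed

lemma not_in_interior_polygon:
  assumes "u \<noteq> 0" and "\<forall>i<n. inner u (v i) \<le> inner u x"
  shows "x \<notin> interior (polygon v n)"
proof -
  have "polygon v n \<subseteq> {y. inner u y \<le> inner u x}"
    unfolding polygon_def using assms(2) by (intro hull_minimal) (auto simp: convex_halfspace_le)
  then have "interior (polygon v n) \<subseteq> {y. inner u y < inner u x}"
    using interior_mono[of "polygon v n" "{y. inner u y \<le> inner u x}"] assms(1) by simp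
  then show ?thesis by auto
qed

lemma sum_lessThan_4: "(\<Sum>i<4::nat. f i) = f 0 + f 1 + f 2 + (f 3 :: 'a::comm_monoid_add)"
  by (simp add: eval_nat_numeral add.assoc)

lemma feasible_quadV_iff:
  "feasible quadV 4 x q \<longleftrightarrow> (\<forall>i<4. 0 \<le> q i) \<and> (\<forall>i\<ge>4. q i = 0) \<and>
     q 0 + q 1 + q 2 + q 3 = 1 \<and> x = (q 1 - q 3, q 2 + q 3 / 2)"
  by (auto simp: feasible_def sum_lessThan_4 quadV_def)

lemma feasible_quadV_interior:
  assumes q: "feasible quadV 4 x q" and pos: "0 < q 0" "0 < q 1" "0 < q 2"
  shows "x \<in> interior (polygon quadV 4)"
proof -
  define r where "r = min (min (q 0) (q 1)) (q 2) / 2"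
  have "ball x r \<subseteq> polygon quadV 4"
  proof
    fix y assume "y \<in> ball x r"
    let ?d1 = "fst y - fst x" and ?d2 = "snd y - snd x"
    have "\<bar>?d1\<bar> < r" "\<bar>?d2\<bar> < r"
      using \<open>y \<in> ball x r\<close> dist_fst_le[of x y] dist_snd_le[of x y]
      by (auto simp: dist_real_def dist_commute)
    moreover have "r \<le> q 0 / 2" "r \<le> q 1 / 2" "r \<le> q 2 / 2"
      by (auto simp: r_def)
    ultimately have "0 < q 0 - ?d1 - ?d2" "0 < q 1 + ?d1" "0 < q 2 + ?d2"
      by (auto simp: abs_less_iff)
    then have "feasible quadV 4 y (q(0 := q 0 - ?d1 - ?d2, 1 := q 1 + ?d1, 2 := q 2 + ?d2))"
      using q unfolding feasible_quadV_iff by (auto simp: prod_eq_iff)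
    then show "y \<in> polygon quadV 4" by (rule feasible_in_polygon)
  qed
  moreover have "0 < r" using pos by (simp add: r_def)
  ultimately show ?thesis by (auto simp: mem_interior)
qed

lemma nxt_prv: "i < n \<Longrightarrow> nxt n (prv n i) = i"
  by (cases i) (auto simp: nxt_def prv_def mod_Suc_eq)

definition edge_fun :: "(nat \<Rightarrow> pt) \<Rightarrow> nat \<Rightarrow> pt \<Rightarrow> nat \<Rightarrow> real" where
  "edge_fun v n x i = 2 * sarea (v i) (v (nxt n i)) x"

lemma wach_weight_edge_fun:
  assumes "i < n"
  shows "wach_weight v n x i =
    4 * sarea (v (prv n i)) (v i) (v (nxt n i)) / (edge_fun v n x (prv n i) * edge_fun v n x i)"
proof -
  have "sarea x (v i) (v (nxt n i)) = sarea (v i) (v (nxt n i)) x"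
    by (simp add: sarea_def algebra_simps)
  then show ?thesis
    using assms by (simp add: wach_weight_def edge_fun_def nxt_prv)
qed

lemma edge_fun_quadV:
  "edge_fun quadV 4 (a, b) 0 = b" "edge_fun quadV 4 (a, b) 1 = 1 - a - b"
  "edge_fun quadV 4 (a, b) 2 = 1 - b + a / 2" "edge_fun quadV 4 (a, b) 3 = b + a / 2"
  by (simp_all add: edge_fun_def sarea_def quadV_def nxt_def field_simps)

(* Keep the vertex index 1 a numeral instead of Suc 0, so that equations such as
   edge_fun_quadV keep matching after simplification. *)
declare One_nat_def [simp del]

lemma all_less_4: "(\<forall>j<4::nat. P j) \<longleftrightarrow> P 0 \<and> P 1 \<and> P 2 \<and> P 3"
  by (auto simp: numeral_eq_Suc less_Suc_eq One_nat_def)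

abbreviation quadV_edge :: "pt \<Rightarrow> nat \<Rightarrow> real" where
  "quadV_edge \<equiv> edge_fun quadV 4"

(* The Wachspress weight of vertex i times the product of all four edge functions;
   the factors 1, 2, 3, 2 are 4 A(v_(i-1), v_i, v_(i+1)). *)
definition quadV_weight :: "pt \<Rightarrow> nat \<Rightarrow> real" where
  "quadV_weight x i =
     (if i = 0 then quadV_edge x 1 * quadV_edge x 2
      else if i = 1 then 2 * quadV_edge x 2 * quadV_edge x 3
      else if i = 2 then 3 * quadV_edge x 3 * quadV_edge x 0
      else if i = 3 then 2 * quadV_edge x 0 * quadV_edge x 1 else 0)"

definition quadV_coord :: "pt \<Rightarrow> nat \<Rightarrow> real" where
  "quadV_coord x i = quadV_weight x i / (\<Sum>j<4. quadV_weight x j)"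

lemma wach_weight_quadV:
  assumes "\<forall>j<4. quadV_edge x j \<noteq> 0" and "i < 4"
  shows "wach_weight quadV 4 x i = quadV_weight x i /
           (quadV_edge x 0 * quadV_edge x 1 * quadV_edge x 2 * quadV_edge x 3)"
proof -
  from assms(2) consider "i = 0" | "i = 1" | "i = 2" | "i = 3" by linarith
  moreover from assms(1)
  have "quadV_edge x 0 \<noteq> 0" "quadV_edge x 1 \<noteq> 0" "quadV_edge x 2 \<noteq> 0" "quadV_edge x 3 \<noteq> 0"
    by auto
  ultimately show ?thesis
    by cases (simp_all add: wach_weight_edge_fun quadV_weight_def sarea_def quadV_def prv_def nxt_def
        field_simps)
qed

lemma quadV_weight_pos:
  assumes "\<forall>j<4. 0 < quadV_edge x j" and "i < 4"
  shows "0 < quadV_weight x i"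
  using assms by (auto simp: all_less_4 quadV_weight_def)

lemma quadV_weight_sum_pos:
  assumes "\<forall>j<4. 0 < quadV_edge x j"
  shows "0 < (\<Sum>j<4. quadV_weight x j)"
  using quadV_weight_pos[OF assms] by (intro sum_pos) (auto simp: lessThan_empty_iff)

lemma quadV_coord_pos:
  assumes "\<forall>j<4. 0 < quadV_edge x j" and "i < 4"
  shows "0 < quadV_coord x i"
  using quadV_weight_pos[OF assms] quadV_weight_sum_pos[OF assms(1)]
  by (simp add: quadV_coord_def)

lemma feasible_quadV_coord:
  assumes "\<forall>j<4. 0 < quadV_edge x j"
  shows "feasible quadV 4 x (quadV_coord x)"
proof -
  obtain a b where x: "x = (a, b)" by fastforce
  let ?U = "\<Sum>j<4. quadV_weight x j"
  have U: "0 < ?U" by (rule quadV_weight_sum_pos[OF assms])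
  have "quadV_weight x 1 - quadV_weight x 3 = a * ?U"
    and "quadV_weight x 2 + quadV_weight x 3 / 2 = b * ?U"
    by (simp_all add: x sum_lessThan_4 quadV_weight_def edge_fun_quadV field_simps)
  with U have "quadV_coord x 1 - quadV_coord x 3 = a"
    and "quadV_coord x 2 + quadV_coord x 3 / 2 = b"
    by (simp_all add: quadV_coord_def field_simps)
  moreover have "quadV_coord x 0 + quadV_coord x 1 + quadV_coord x 2 + quadV_coord x 3 = 1"
    using U by (simp add: quadV_coord_def sum_lessThan_4 flip: add_divide_distrib)
  ultimately show ?thesis
    using quadV_coord_pos[OF assms]
    by (auto simp: feasible_quadV_iff x quadV_coord_def quadV_weight_def less_imp_le)
qed

lemma wachspress_quadV:
  assumes pos: "\<forall>j<4. 0 < quadV_edge x j" and "i < 4"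
  shows "wachspress quadV 4 x i = quadV_coord x i"
proof -
  let ?E = "quadV_edge x 0 * quadV_edge x 1 * quadV_edge x 2 * quadV_edge x 3"
  have interior: "x \<in> interior (polygon quadV 4)"
    using feasible_quadV_interior[OF feasible_quadV_coord[OF pos]] quadV_coord_pos[OF pos]
    by simp
  have w: "wach_weight quadV 4 x j = quadV_weight x j / ?E" if "j < 4" for j
    using wach_weight_quadV pos that by (simp add: order_less_imp_not_eq2)
  then have "(\<Sum>j<4. wach_weight quadV 4 x j) = (\<Sum>j<4. quadV_weight x j) / ?E"
    by (simp add: sum_divide_distrib)
  with interior show ?thesis
    using w[OF \<open>i < 4\<close>] quadV_weight_sum_pos[OF pos] pos
    by (simp add: wachspress_def quadV_coord_def all_less_4)
qed

lemma gibbs_quadV_eqI: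
  assumes p: "feasible quadV 4 x p" "\<forall>i<4. 0 < p i"
    and rel: "p 1 ^ 2 * p 3 ^ 2 = p 0 ^ 3 * p 2"
  shows "gibbs quadV 4 x = p"
proof (rule gibbs_eqI[OF p])
  have "ln (p 1 ^ 2 * p 3 ^ 2) = ln (p 0 ^ 3 * p 2)"
    using rel by simp
  then have "2 * ln (p 3) = 3 * ln (p 0) - 2 * ln (p 1) + ln (p 2)"
    using p(2) by (simp add: all_less_4 ln_mult ln_realpow)
  then have "ln (p 3) = ln (p 0) - (ln (p 1) - ln (p 0)) + (ln (p 2) - ln (p 0)) / 2"
    by (simp add: field_simps)
  then show "\<forall>i<4. ln (p i) = ln (p 0) + inner (ln (p 1) - ln (p 0), ln (p 2) - ln (p 0)) (quadV i)"
    by (simp add: all_less_4 quadV_def inner_prod_def)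
qed

lemma gibbs_quadV_coord:
  assumes pos: "\<forall>j<4. 0 < quadV_edge x j"
    and equator: "16 * quadV_edge x 0 * quadV_edge x 3 = 3 * quadV_edge x 1 * quadV_edge x 2"
  shows "gibbs quadV 4 x = quadV_coord x"
proof (rule gibbs_quadV_eqI[OF feasible_quadV_coord[OF pos]])
  show "\<forall>i<4. 0 < quadV_coord x i"
    using quadV_coord_pos[OF pos] by simp
  let ?e = "quadV_edge x" and ?U = "\<Sum>j<4. quadV_weight x j"
  have "quadV_weight x 1 ^ 2 * quadV_weight x 3 ^ 2 = (16 * ?e 0 * ?e 3) * (?e 0 * ?e 1 ^ 2 * ?e 2 ^ 2 * ?e 3)"
    by (simp add: quadV_weight_def power2_eq_square algebra_simps)
  also have "\<dots> = (3 * ?e 1 * ?e 2) * (?e 0 * ?e 1 ^ 2 * ?e 2 ^ 2 * ?e 3)"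
    by (simp only: equator)
  also have "\<dots> = quadV_weight x 0 ^ 3 * quadV_weight x 2"
    by (simp add: quadV_weight_def power2_eq_square power3_eq_cube algebra_simps)
  finally have "quadV_weight x 1 ^ 2 * quadV_weight x 3 ^ 2 / ?U ^ 4
      = quadV_weight x 0 ^ 3 * quadV_weight x 2 / ?U ^ 4"
    by simp
  then show "quadV_coord x 1 ^ 2 * quadV_coord x 3 ^ 2 = quadV_coord x 0 ^ 3 * quadV_coord x 2"
    by (simp add: quadV_coord_def power_divide flip: power_Suc2)
qed

lemma quadV_equator_root:
  fixes a b :: real
  assumes a: "-1 < a" "a < 1"
    and b: "b = (-12 - 13*a + sqrt (25^2 + 11*13*(1 - a^2))) / (4*13)"
  shows "\<forall>j<4. 0 < quadV_edge (a, b) j"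
    and "16 * quadV_edge (a, b) 0 * quadV_edge (a, b) 3 = 3 * quadV_edge (a, b) 1 * quadV_edge (a, b) 2"
proof -
  define s where "s = sqrt (768 - 143 * a^2)"
  have "a^2 < 1"
    using a by (simp add: abs_square_less_1)
  then have s_sq: "s^2 = 768 - 143 * a^2"
    by (simp add: s_def)
  have b_s: "52 * b = s - 12 - 13 * a"
    using b by (simp add: s_def algebra_simps)
  have "0 < (1 - a) * (a + 2)" "0 < (1 - a) * (2 - a)" "0 < (1 + a) * (a + 2)" "0 < (1 + a) * (2 - a)"
    using a by simp_all
  then have "12 + 13 * a < s" "s < 64 - 39 * a" "s < 64 + 39 * a" "12 - 13 * a < s"
    unfolding s_def using a
    by (intro real_less_rsqrt real_less_lsqrt; simp add: power2_eq_square algebra_simps)+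
  with b_s show "\<forall>j<4. 0 < quadV_edge (a, b) j"
    by (simp add: all_less_4 edge_fun_quadV)
  have "(52 * b + 12 + 13 * a)^2 = 768 - 143 * a^2"
    using b_s s_sq by simp
  then show "16 * quadV_edge (a, b) 0 * quadV_edge (a, b) 3 = 3 * quadV_edge (a, b) 1 * quadV_edge (a, b) 2"
    by (simp add: edge_fun_quadV power2_eq_square algebra_simps)
qed

lemma gibbs_quadV_vertex:
  assumes k: "k = 1 \<or> k = 3"
  shows "gibbs quadV 4 (quadV k) = (\<lambda>j. if j = k then 1 else 0)"
proof (rule gibbs_unique_feasible)
  show "feasible quadV 4 (quadV k) (\<lambda>j. if j = k then 1 else 0)"
    using k by (auto simp: feasible_quadV_iff quadV_def)
next
  fix q assume "feasible quadV 4 (quadV k) q"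
  then have q: "0 \<le> q 0" "0 \<le> q 1" "0 \<le> q 2" "0 \<le> q 3" "\<forall>j\<ge>4. q j = 0"
    "q 0 + q 1 + q 2 + q 3 = 1" "quadV k = (q 1 - q 3, q 2 + q 3 / 2)"
    by (auto simp: feasible_quadV_iff all_less_4)
  with k have "q 0 = 0" "q 1 = (if k = 1 then 1 else 0)" "q 2 = 0" "q 3 = (if k = 3 then 1 else 0)"
    by (auto simp: quadV_def)
  moreover have "j = 0 \<or> j = 1 \<or> j = 2 \<or> j = 3 \<or> 4 \<le> j" for j :: nat
    by linarith
  ultimately show "q = (\<lambda>j. if j = k then 1 else 0)"
    using q(5) k by metis
qed

lemma wachspress_quadV_vertex:
  assumes k: "k = 1 \<or> k = 3" and "i < 4"
  shows "wachspress quadV 4 (quadV k) i = (if i = k then 1 else 0)"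
proof -
  have interior: "quadV k \<notin> interior (polygon quadV 4)"
    using k by (intro not_in_interior_polygon[where u = "(fst (quadV k), 0)"])
      (auto simp: quadV_def all_less_4 inner_prod_def zero_prod_def)
  have segments: "(1, 0) \<notin> closed_segment (0, 1) (-1 :: real, 1/2 :: real)"
    "(1, 0) \<notin> closed_segment (-1, 1/2) (0 :: real, 0 :: real)"
    "(-1, 1/2) \<notin> closed_segment (0, 0) (1 :: real, 0 :: real)"
    "(-1, 1/2) \<notin> closed_segment (1, 0) (0 :: real, 1 :: real)"
    by (auto simp: in_segment)
  from \<open>i < 4\<close> consider "i = 0" | "i = 1" | "i = 2" | "i = 3" by linarith
  then show ?thesis
    using k interior segments
    by cases (elim disjE; simp add: wachspress_def nxt_def prv_def quadV_def)+
qed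

theorem theorem5p10:
  fixes a b :: real
  assumes "-1 \<le> a" "a \<le> 1"
    and "b = (-12 - 13*a + sqrt (25^2 + 11*13*(1 - a^2))) / (4*13)"
  shows "(a, b) \<in> polygon quadV 4 \<and>
         (\<forall>i<4. gibbs quadV 4 (a, b) i = wachspress quadV 4 (a, b) i)"
proof (cases "a = 1 \<or> a = -1")
  case True
  with assms(3) have "(a, b) = quadV 1 \<or> (a, b) = quadV 3"
    by (auto simp: quadV_def)
  then obtain k where k: "k = 1 \<or> k = 3" and ab: "(a, b) = quadV k"
    by blast
  have "quadV k \<in> polygon quadV 4"
    unfolding polygon_def using k by (intro hull_inc) auto
  then show ?thesis
    using gibbs_quadV_vertex[OF k] wachspress_quadV_vertex[OF k] unfolding ab by simp
next
  case False
  with assms have "-1 < a" "a < 1" by auto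
  note root = quadV_equator_root[OF this assms(3)]
  show ?thesis
    using feasible_in_polygon[OF feasible_quadV_coord[OF root(1)]]
      gibbs_quadV_coord[OF root] wachspress_quadV[OF root(1)]
    by simp
qed

end
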